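(* Let $k\ge 2$ and $G=\Theta(2,2,2k)$ with end vertices $u$ and $v$. Let $m\ge 3$ and let $L$ be an $m$-assignment for $G$ with $L(u)=L(v)$. Then $P(G,L)\ge P(G,m)$.
   Context: $\Theta(l_1,l_2,l_3)$ denotes two end vertices joined by three internally disjoint paths of lengths $l_1,l_2,l_3$. An $m$-assignment $L$ assigns to each vertex $w$ a set $L(w)$ of $m$ colors; $P(G,L)$ is the number of proper colorings $f$ of $G$ with $f(w)\in L(w)$ for all $w$. $P(G,m)$ is the chromatic polynomial of $G$. *)

theory Defs
  imports Main
begin

text \<open>Vertex (0,0) is the end vertex u, (0,1) is the end
  vertex v; for path i (i = 1,2,3) of length l_i the internal vertices are (i,j), 1 <= j < l_i.
  theta_pv ls i j is the j-th vertex on path i (j = 0 .. l_i).\<close>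

definition theta_pv :: "(nat \<Rightarrow> nat) \<Rightarrow> nat \<Rightarrow> nat \<Rightarrow> nat \<times> nat" where
  "theta_pv ls i j = (if j = 0 then (0,0) else if j = ls i then (0,1) else (i,j))"

definition theta_lens :: "nat \<Rightarrow> nat \<Rightarrow> nat \<Rightarrow> nat \<Rightarrow> nat" where
  "theta_lens l1 l2 l3 i = (if i = 1 then l1 else if i = 2 then l2 else l3)"

definition theta_V :: "nat \<Rightarrow> nat \<Rightarrow> nat \<Rightarrow> (nat \<times> nat) set" where
  "theta_V l1 l2 l3 = {theta_pv (theta_lens l1 l2 l3) i j | i j.
      i \<in> {1,2,3} \<and> j \<le> theta_lens l1 l2 l3 i}"

definition theta_E :: "nat \<Rightarrow> nat \<Rightarrow> nat \<Rightarrow> (nat \<times> nat) set set" where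
  "theta_E l1 l2 l3 = {{theta_pv (theta_lens l1 l2 l3) i j, theta_pv (theta_lens l1 l2 l3) i (Suc j)} | i j.
      i \<in> {1,2,3} \<and> j < theta_lens l1 l2 l3 i}"

abbreviation theta_u :: "nat \<times> nat" where "theta_u \<equiv> (0,0)"
abbreviation theta_v :: "nat \<times> nat" where "theta_v \<equiv> (0,1)"

definition proper_list_colorings :: "'a set \<Rightarrow> 'a set set \<Rightarrow> ('a \<Rightarrow> 'c set) \<Rightarrow> ('a \<Rightarrow> 'c) set" where
  "proper_list_colorings V E L = {f. (\<forall>w\<in>V. f w \<in> L w) \<and> (\<forall>w. w \<notin> V \<longrightarrow> f w = undefined)
      \<and> (\<forall>x y. {x,y} \<in> E \<longrightarrow> f x \<noteq> f y)}"

definition list_color_count :: "'a set \<Rightarrow> 'a set set \<Rightarrow> ('a \<Rightarrow> 'c set) \<Rightarrow> nat" where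
  "list_color_count V E L = card (proper_list_colorings V E L)"

definition chrom_poly :: "'a set \<Rightarrow> 'a set set \<Rightarrow> nat \<Rightarrow> nat" where
  "chrom_poly V E m = list_color_count V E (\<lambda>_. {0..<m::nat})"

definition is_m_assignment :: "'a set \<Rightarrow> nat \<Rightarrow> ('a \<Rightarrow> 'c set) \<Rightarrow> bool" where
  "is_m_assignment V m L \<longleftrightarrow> (\<forall>w\<in>V. finite (L w) \<and> card (L w) = m)"

end

theory Submission
  imports Defs
begin

text \<open>Fix the colours a of u and b of v. Each middle vertex of the two paths of length 2 then has
  at least m - card {a, b} admissible colours, with equality for the uniform assignment
  {0..<m}, and the long path contributes the number W(a, b) of colourings of its interior,
  whose lists are X_1, ..., X_r with r = 2k - 1. Splitting
  (m - card {a, b})^2 = (m - 2)^2 + (2m - 3) [a = b] bounds P(G, L) from below by (m - 2)^2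
  times the number of colourings of the path with lists L(u), X_1, ..., X_r, L(u) plus 2m - 3
  times the diagonal sum of the W(a, a); for the uniform assignment the bound is exact.
  As r is odd, the uniform counts satisfy W(a, a) = W(a, b) + 1 for a \<noteq> b, and comparing
  with the uniform assignment along bijections between the lists shows that the diagonal sum
  is at least m times the uniform W(a, b): it falls short of the uniform one by at most m.
  Unless all X_i equal L(u), in which case both sides agree, the sequence of lists of the
  path changes at least twice, and every change gains (m - 1)^r colourings of the path; as
  (2m - 3) m \<le> 2 (m - 2)^2 (m - 1)^r, this pays for the loss.\<close>

section \<open>Colourings of the interior of a path\<close>

fun interior_count :: "'c set list \<Rightarrow> 'c \<Rightarrow> 'c \<Rightarrow> nat" where
  "interior_count [] a b = of_bool (a \<noteq> b)"
| "interior_count (X # Xs) a b = (\<Sum>c\<in>X - {a}. interior_count Xs c b)"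

definition interior_colourings :: "'c set list \<Rightarrow> 'c \<Rightarrow> 'c \<Rightarrow> 'c list set" where
  "interior_colourings Xs a b = {ys. list_all2 (\<in>) ys Xs \<and> successively (\<noteq>) (a # ys @ [b])}"

lemma interior_colourings_Nil: "interior_colourings [] a b = (if a = b then {} else {[]})"
  by (auto simp: interior_colourings_def)

lemma interior_colourings_Cons:
  "interior_colourings (X # Xs) a b = (\<Union>c\<in>X - {a}. (#) c ` interior_colourings Xs c b)"
proof -
  have "ys \<in> interior_colourings (X # Xs) a b \<longleftrightarrow>
      (\<exists>c zs. ys = c # zs \<and> c \<in> X - {a} \<and> zs \<in> interior_colourings Xs c b)" for ys
    by (cases ys) (auto simp: interior_colourings_def list_all2_Cons2)
  then show ?thesis
    by blast
qed

lemma finite_interior_colourings: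
  assumes "\<forall>X\<in>set Xs. finite X"
  shows "finite (interior_colourings Xs a b)"
  using assms by (induction Xs arbitrary: a) (auto simp: interior_colourings_Nil interior_colourings_Cons)

lemma card_interior_colourings:
  assumes "\<forall>X\<in>set Xs. finite X"
  shows "card (interior_colourings Xs a b) = interior_count Xs a b"
  using assms
proof (induction Xs arbitrary: a)
  case Nil
  then show ?case
    by (simp add: interior_colourings_Nil)
next
  case (Cons X Xs)
  then have "card (interior_colourings (X # Xs) a b) = (\<Sum>c\<in>X - {a}. card ((#) c ` interior_colourings Xs c b))"
    unfolding interior_colourings_Cons by (intro card_UN_disjoint) (auto simp: finite_interior_colourings)
  also have "\<dots> = interior_count (X # Xs) a b"
    using Cons by (simp add: card_image)
  finally show ?case .
qed

lemma sum_interior_count_Nil: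
  assumes "finite Y"
  shows "(\<Sum>b\<in>Y. interior_count [] a b) = card (Y - {a})"
proof -
  have "Y \<inter> {b. a \<noteq> b} = Y - {a}"
    by blast
  with assms show ?thesis
    by (simp add: sum_of_bool_eq)
qed

fun uniform_counts :: "nat \<Rightarrow> nat \<Rightarrow> nat \<times> nat" where
  "uniform_counts m 0 = (0, 1)"
| "uniform_counts m (Suc i) =
     ((m - 1) * snd (uniform_counts m i), fst (uniform_counts m i) + (m - 2) * snd (uniform_counts m i))"

lemma interior_count_replicate:
  assumes "finite S" "card S = m" "a \<in> S" "b \<in> S"
  shows "interior_count (replicate i S) a b =
           (if a = b then fst (uniform_counts m i) else snd (uniform_counts m i))"
  using assms(3)
proof (induction i arbitrary: a)
  case 0
  then show ?case by simp
next
  case (Suc i)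
  let ?s = "fst (uniform_counts m i)" and ?d = "snd (uniform_counts m i)"
  have "interior_count (replicate (Suc i) S) a b = (\<Sum>c\<in>S - {a}. if c = b then ?s else ?d)"
    using Suc.IH by (auto intro!: sum.cong)
  also have "\<dots> = of_bool (b \<noteq> a) * ?s + card (S - {a, b}) * ?d"
  proof (cases "b = a")
    case True
    then show ?thesis by (simp add: insert_Diff_if)
  next
    case False
    with assms Suc.prems have "b \<in> S - {a}" by simp
    with assms(1) show ?thesis by (simp add: sum.remove Diff_insert2 [symmetric] insert_commute)
  qed
  also have "\<dots> = (if a = b then (m - 1) * ?d else ?s + (m - 2) * ?d)"
    using assms Suc.prems by (auto simp: card_Diff_subset)
  finally show ?case by simp
qed

lemma uniform_counts_odd:
  assumes "2 \<le> m" "odd i"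
  shows "fst (uniform_counts m i) = snd (uniform_counts m i) + 1"
proof -
  have "if even i then snd (uniform_counts m i) = fst (uniform_counts m i) + 1
        else fst (uniform_counts m i) = snd (uniform_counts m i) + 1"
  proof (induction i)
    case (Suc i)
    have "(m - 1) * snd (uniform_counts m i) = snd (uniform_counts m i) + (m - 2) * snd (uniform_counts m i)"
      using assms(1) by (simp add: diff_mult_distrib flip: add_mult_distrib)
    with Suc show ?case by (auto split: if_splits)
  qed simp
  with assms(2) show ?thesis by simp
qed

lemma sum_interior_count_replicate:
  assumes "finite S" "card S = m" "a \<in> S"
  shows "(\<Sum>b\<in>S. interior_count (replicate i S) a b) = (m - 1) ^ Suc i"
  using assms(3)
proof (induction i arbitrary: a)
  case 0
  then show ?case
    using assms sum_interior_count_Nil [OF assms(1), of a] by simp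
next
  case (Suc i)
  have "(\<Sum>b\<in>S. interior_count (replicate (Suc i) S) a b)
      = (\<Sum>c\<in>S - {a}. \<Sum>b\<in>S. interior_count (replicate i S) c b)"
    by (simp add: sum.swap [of _ S])
  also have "\<dots> = (\<Sum>c\<in>S - {a}. (m - 1) ^ Suc i)"
    using Suc.IH by simp
  finally show ?case
    using assms Suc.prems by simp
qed

lemma ex_bij_betw_extending:
  assumes "finite X" "finite S" "card X = card S" "inj_on \<phi> Y" "\<phi> ` Y \<subseteq> S"
  shows "\<exists>\<phi>'. bij_betw \<phi>' X S \<and> (\<forall>c\<in>X \<inter> Y. \<phi>' c = \<phi> c)"
proof -
  let ?A = "X \<inter> Y"
  have inj: "inj_on \<phi> ?A"
    using assms(4) by (rule inj_on_subset) auto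
  have "card (S - \<phi> ` ?A) = card S - card ?A"
    using assms(1,5) inj by (subst card_Diff_subset) (auto simp: card_image)
  moreover have "card (X - ?A) = card X - card ?A"
    using assms(1) by (intro card_Diff_subset) auto
  ultimately have "card (X - ?A) = card (S - \<phi> ` ?A)"
    using assms(3) by simp
  then obtain g where g: "bij_betw g (X - ?A) (S - \<phi> ` ?A)"
    using assms(1,2) finite_same_card_bij by (meson finite_Diff)
  define \<phi>' where "\<phi>' c = (if c \<in> ?A then \<phi> c else g c)" for c
  have "bij_betw \<phi>' ?A (\<phi> ` ?A)"
    using inj by (auto simp: bij_betw_def inj_on_def \<phi>'_def)
  moreover have "bij_betw \<phi>' (X - ?A) (S - \<phi> ` ?A)"
    using g by (rule bij_betw_cong [THEN iffD1, rotated]) (auto simp: \<phi>'_def)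
  ultimately have "bij_betw \<phi>' (?A \<union> (X - ?A)) (\<phi> ` ?A \<union> (S - \<phi> ` ?A))"
    by (rule bij_betw_combine) blast
  moreover have "?A \<union> (X - ?A) = X" "\<phi> ` ?A \<union> (S - \<phi> ` ?A) = S"
    using assms(5) by auto
  ultimately show ?thesis
    by (auto simp: \<phi>'_def)
qed

text \<open>The end colours are relabelled list by list, along bijections of the current list onto S
  that agree with the previous relabelling.\<close>

lemma interior_count_replicate_le:
  assumes "finite S" "card S = m" "S \<noteq> {}" "\<forall>X\<in>set Xs. finite X \<and> card X = m"
    and "inj_on \<phi> Y" "\<phi> ` Y \<subseteq> S"
  shows "\<exists>\<psi>. (\<forall>b. \<psi> b \<in> S) \<and>
           (\<forall>a\<in>Y. \<forall>b. interior_count (replicate (length Xs) S) (\<phi> a) (\<psi> b) \<le> interior_count Xs a b)"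
  using assms(4-6)
proof (induction Xs arbitrary: Y \<phi>)
  case Nil
  obtain s where "s \<in> S"
    using assms(3) by blast
  with Nil.prems show ?case
    by (intro exI [of _ "\<lambda>b. if b \<in> Y then \<phi> b else s"]) auto
next
  case (Cons X Xs)
  obtain \<phi>' where bij: "bij_betw \<phi>' X S" and agree: "\<forall>c\<in>X \<inter> Y. \<phi>' c = \<phi> c"
    using ex_bij_betw_extending [of X S \<phi> Y] assms(1,2) Cons.prems by auto
  have "\<exists>\<psi>. (\<forall>b. \<psi> b \<in> S) \<and>
      (\<forall>c\<in>X. \<forall>b. interior_count (replicate (length Xs) S) (\<phi>' c) (\<psi> b) \<le> interior_count Xs c b)"
    using Cons.prems bij_betw_imp_inj_on [OF bij] bij_betw_imp_surj_on [OF bij]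
    by (intro Cons.IH) auto
  then obtain \<psi> where \<psi>: "\<forall>b. \<psi> b \<in> S"
    and IH: "\<forall>c\<in>X. \<forall>b. interior_count (replicate (length Xs) S) (\<phi>' c) (\<psi> b) \<le> interior_count Xs c b"
    by blast
  have "interior_count (replicate (length (X # Xs)) S) (\<phi> a) (\<psi> b) \<le> interior_count (X # Xs) a b"
    if a: "a \<in> Y" for a b
  proof -
    let ?R = "replicate (length Xs) S"
    have "bij_betw \<phi>' {c\<in>X. \<phi>' c \<noteq> \<phi> a} (S - {\<phi> a})"
      using bij unfolding bij_betw_def inj_on_def by auto
    then have "interior_count (replicate (length (X # Xs)) S) (\<phi> a) (\<psi> b)
        = (\<Sum>c | c \<in> X \<and> \<phi>' c \<noteq> \<phi> a. interior_count ?R (\<phi>' c) (\<psi> b))"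
      by (simp add: sum.reindex_bij_betw [symmetric])
    also have "\<dots> \<le> (\<Sum>c\<in>X - {a}. interior_count ?R (\<phi>' c) (\<psi> b))"
      using Cons.prems a agree by (intro sum_mono2) auto
    also have "\<dots> \<le> (\<Sum>c\<in>X - {a}. interior_count Xs c b)"
      using IH by (intro sum_mono) auto
    also have "\<dots> = interior_count (X # Xs) a b"
      by simp
    finally show ?thesis .
  qed
  with \<psi> show ?case
    by blast
qed

lemma sum_interior_count_diag_ge:
  assumes "finite S" "card S = m" "\<forall>X\<in>set Xs. finite X \<and> card X = m"
  shows "m * min (fst (uniform_counts m (length Xs))) (snd (uniform_counts m (length Xs)))
         \<le> (\<Sum>a\<in>S. interior_count Xs a a)"
proof (cases "S = {}")
  case False
  let ?R = "replicate (length Xs) S"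
  obtain \<psi> where \<psi>: "\<forall>b. \<psi> b \<in> S" and le: "\<forall>a\<in>S. \<forall>b. interior_count ?R a (\<psi> b) \<le> interior_count Xs a b"
    using interior_count_replicate_le [OF assms(1,2) False assms(3), of id S] by auto
  have "m * min (fst (uniform_counts m (length Xs))) (snd (uniform_counts m (length Xs)))
      = (\<Sum>a\<in>S. min (fst (uniform_counts m (length Xs))) (snd (uniform_counts m (length Xs))))"
    using assms(2) by simp
  also have "\<dots> \<le> (\<Sum>a\<in>S. interior_count ?R a (\<psi> a))"
    using \<psi> interior_count_replicate [OF assms(1,2)] by (intro sum_mono) simp
  also have "\<dots> \<le> (\<Sum>a\<in>S. interior_count Xs a a)"
    using le by (intro sum_mono) auto
  finally show ?thesis .
qed (use assms in simp)

fun changes :: "'a list \<Rightarrow> nat" where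
  "changes (x # y # zs) = of_bool (x \<noteq> y) + changes (y # zs)"
| "changes _ = 0"

lemma changes_append: "changes (x # xs @ y # ys) = changes (x # xs @ [y]) + changes (y # ys)"
  by (induction xs arbitrary: x) auto

lemma changes_pos: "x \<noteq> y \<Longrightarrow> 1 \<le> changes (x # xs @ [y])"
  by (induction xs arbitrary: x) auto

lemma changes_ge_2:
  assumes "x \<in> set xs" "x \<noteq> s"
  shows "2 \<le> changes (s # xs @ [s])"
proof -
  obtain ys zs where "xs = ys @ x # zs"
    using split_list [OF assms(1)] by blast
  then have "changes (s # xs @ [s]) = changes (s # ys @ [x]) + changes (x # zs @ [s])"
    using changes_append [of s ys x "zs @ [s]"] by simp
  with assms(2) changes_pos show ?thesis
    by (metis add_mono one_add_one)
qed

lemma sum_sum_Diff_eq: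
  fixes w :: "'a \<Rightarrow> nat"
  assumes "finite X" "card X = m" "finite Y" "card Y = m"
  shows "(\<Sum>c\<in>X. \<Sum>d\<in>Y - {c}. w d) = (m - 1) * (\<Sum>d\<in>Y. w d) + (\<Sum>d\<in>Y - X. w d)"
proof -
  have "(\<Sum>c\<in>X. \<Sum>d\<in>{d \<in> Y. c \<noteq> d}. w d) = (\<Sum>d\<in>Y. \<Sum>c\<in>{c \<in> X. c \<noteq> d}. w d)"
    by (rule sum.swap_restrict [OF assms(1,3)])
  moreover have "\<And>c. {d \<in> Y. c \<noteq> d} = Y - {c}" "\<And>d. {c \<in> X. c \<noteq> d} = X - {d}"
    by blast+
  ultimately have "(\<Sum>c\<in>X. \<Sum>d\<in>Y - {c}. w d) = (\<Sum>d\<in>Y. \<Sum>c\<in>X - {d}. w d)"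
    by simp
  also have "\<dots> = (\<Sum>d\<in>Y. (m - 1) * w d + of_bool (d \<notin> X) * w d)"
  proof (intro sum.cong refl)
    fix d
    assume "d \<in> Y"
    with assms(3,4) have "m \<noteq> 0"
      by (auto simp: card_gt_0_iff)
    then obtain k where "m = Suc k"
      using not0_implies_Suc by blast
    with assms(1,2) show "(\<Sum>c\<in>X - {d}. w d) = (m - 1) * w d + of_bool (d \<notin> X) * w d"
      by (cases "d \<in> X") simp_all
  qed
  also have "\<dots> = (m - 1) * (\<Sum>d\<in>Y. w d) + (\<Sum>d\<in>Y - X. w d)"
    using assms(3) by (simp add: sum.distrib sum_distrib_left sum.If_cases set_diff_eq Int_def)
  finally show ?thesis .
qed

lemma sum_sum_Diff_ge:
  fixes w :: "'a \<Rightarrow> nat"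
  assumes "finite X" "card X = m" "finite Y" "card Y = m" "\<And>d. d \<in> Y \<Longrightarrow> q \<le> w d"
  shows "(m - 1) * (\<Sum>d\<in>Y. w d) + of_bool (X \<noteq> Y) * q \<le> (\<Sum>c\<in>X. \<Sum>d\<in>Y - {c}. w d)"
proof (cases "X = Y")
  case False
  have "\<not> Y \<subseteq> X"
    using False card_subset_eq [OF assms(1)] assms(2,4) by metis
  then obtain d where d: "d \<in> Y - X"
    by blast
  have "q \<le> w d"
    using assms(5) d by blast
  also have "\<dots> \<le> (\<Sum>d\<in>Y - X. w d)"
    using assms(3) d by (intro member_le_sum) auto
  finally show ?thesis
    using False sum_sum_Diff_eq [OF assms(1-4)] by simp
qed (use sum_sum_Diff_eq [OF assms(1-4)] in simp)

lemma sum_interior_count_ge: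
  assumes "\<forall>X\<in>set Xs. finite X \<and> card X = m" "finite Y" "card Y = m"
  shows "(m - 1) ^ Suc (length Xs) \<le> (\<Sum>b\<in>Y. interior_count Xs a b)"
  using assms(1)
proof (induction Xs arbitrary: a)
  case Nil
  show ?case
    using assms(3) sum_interior_count_Nil [OF assms(2), of a] by (simp add: card_Diff_singleton_if)
next
  case (Cons X Xs)
  have "(m - 1) ^ Suc (length (X # Xs)) \<le> card (X - {a}) * (m - 1) ^ Suc (length Xs)"
    using Cons.prems by (simp add: card_Diff_singleton_if)
  also have "\<dots> = (\<Sum>c\<in>X - {a}. (m - 1) ^ Suc (length Xs))"
    by simp
  also have "\<dots> \<le> (\<Sum>c\<in>X - {a}. \<Sum>b\<in>Y. interior_count Xs c b)"
    using Cons by (intro sum_mono) simp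
  also have "\<dots> = (\<Sum>b\<in>Y. interior_count (X # Xs) a b)"
    by (simp add: sum.swap [of _ Y])
  finally show ?case .
qed

lemma sum_sum_interior_count_ge:
  assumes "\<forall>Z\<in>set Xs. finite Z \<and> card Z = m" "finite X" "card X = m" "finite Y" "card Y = m"
  shows "m * (m - 1) ^ Suc (length Xs) + changes (X # Xs @ [Y]) * (m - 1) ^ length Xs
         \<le> (\<Sum>a\<in>X. \<Sum>b\<in>Y. interior_count Xs a b)"
  using assms(1-3)
proof (induction Xs arbitrary: X)
  case Nil
  have "m * (m - 1) + of_bool (X \<noteq> Y) \<le> (\<Sum>a\<in>X. \<Sum>b\<in>Y - {a}. 1)"
    using sum_sum_Diff_ge [OF Nil.prems(2,3) assms(4,5), of 1 "\<lambda>_. 1"] assms(5)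
    by (simp add: mult.commute)
  also have "\<dots> = (\<Sum>a\<in>X. \<Sum>b\<in>Y. interior_count [] a b)"
    using sum_interior_count_Nil [OF assms(4)] by simp
  finally show ?case
    by simp
next
  case (Cons X1 Xs)
  let ?W = "\<lambda>c. \<Sum>b\<in>Y. interior_count Xs c b"
  have IH: "m * (m - 1) ^ Suc (length Xs) + changes (X1 # Xs @ [Y]) * (m - 1) ^ length Xs \<le> sum ?W X1"
    using Cons by simp
  have "(m - 1) * sum ?W X1 + of_bool (X \<noteq> X1) * (m - 1) ^ Suc (length Xs)
      \<le> (\<Sum>a\<in>X. \<Sum>c\<in>X1 - {a}. ?W c)"
    using Cons.prems sum_interior_count_ge [of Xs m Y] assms(4,5)
    by (intro sum_sum_Diff_ge) auto
  also have "\<dots> = (\<Sum>a\<in>X. \<Sum>b\<in>Y. interior_count (X1 # Xs) a b)"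
    by (simp add: sum.swap [of _ Y])
  finally have "(m - 1) * sum ?W X1 + of_bool (X \<noteq> X1) * (m - 1) ^ Suc (length Xs)
      \<le> (\<Sum>a\<in>X. \<Sum>b\<in>Y. interior_count (X1 # Xs) a b)" .
  moreover have "(m - 1) * (m * (m - 1) ^ Suc (length Xs) + changes (X1 # Xs @ [Y]) * (m - 1) ^ length Xs)
      = m * (m - 1) ^ Suc (length (X1 # Xs)) + changes (X1 # Xs @ [Y]) * (m - 1) ^ length (X1 # Xs)"
    by (simp add: distrib_left ac_simps)
  ultimately show ?case
    using mult_left_mono [OF IH, of "m - 1"] by (simp add: distrib_right)
qed

lemma sum_sum_interior_count_ge_nonuniform:
  assumes "\<forall>Z\<in>set Xs. finite Z \<and> card Z = m" "finite S" "card S = m" "X \<in> set Xs" "X \<noteq> S"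
  shows "m * (m - 1) ^ Suc (length Xs) + 2 * (m - 1) ^ length Xs \<le> (\<Sum>a\<in>S. \<Sum>b\<in>S. interior_count Xs a b)"
proof -
  have "2 \<le> changes (S # Xs @ [S])"
    using assms(4,5) by (rule changes_ge_2)
  then have "m * (m - 1) ^ Suc (length Xs) + 2 * (m - 1) ^ length Xs
      \<le> m * (m - 1) ^ Suc (length Xs) + changes (S # Xs @ [S]) * (m - 1) ^ length Xs"
    by (intro add_left_mono mult_right_mono) simp_all
  also have "\<dots> \<le> (\<Sum>a\<in>S. \<Sum>b\<in>S. interior_count Xs a b)"
    by (rule sum_sum_interior_count_ge [OF assms(1-3,2,3)])
  finally show ?thesis .
qed

section \<open>The weighted count\<close>

definition weighted_count :: "nat \<Rightarrow> 'c set \<Rightarrow> 'c set list \<Rightarrow> nat" where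
  "weighted_count m S Xs = (\<Sum>a\<in>S. \<Sum>b\<in>S. (m - card {a, b})\<^sup>2 * interior_count Xs a b)"

lemma weighted_count_split:
  assumes "finite S" "2 \<le> m"
  shows "weighted_count m S Xs = (2 * m - 3) * (\<Sum>a\<in>S. interior_count Xs a a)
           + (m - 2)\<^sup>2 * (\<Sum>a\<in>S. \<Sum>b\<in>S. interior_count Xs a b)"
proof -
  obtain x where "m = x + 2"
    using assms(2) by (metis add.commute le_Suc_ex)
  then have sq: "(m - 1)\<^sup>2 = (m - 2)\<^sup>2 + (2 * m - 3)"
    by (simp add: power2_eq_square algebra_simps)
  have weight: "(m - card {a, b})\<^sup>2 = (m - 2)\<^sup>2 + of_bool (a = b) * (2 * m - 3)" for a b :: 'c
    using sq by (cases "a = b") simp_all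
  then have "weighted_count m S Xs = (\<Sum>a\<in>S. \<Sum>b\<in>S.
      (m - 2)\<^sup>2 * interior_count Xs a b + of_bool (a = b) * ((2 * m - 3) * interior_count Xs a b))"
    unfolding weighted_count_def weight by (simp only: distrib_right mult.assoc)
  also have "\<dots> = (\<Sum>a\<in>S. (m - 2)\<^sup>2 * (\<Sum>b\<in>S. interior_count Xs a b) + (2 * m - 3) * interior_count Xs a a)"
    using assms(1) by (simp add: sum.distrib sum_distrib_left sum.If_cases)
  finally show ?thesis
    by (simp add: sum.distrib sum_distrib_left)
qed

lemma weighted_count_replicate:
  assumes "finite C" "card C = m" "2 \<le> m"
  shows "weighted_count m C (replicate i C)
           = (2 * m - 3) * (m * fst (uniform_counts m i)) + (m - 2)\<^sup>2 * (m * (m - 1) ^ Suc i)"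
  using assms interior_count_replicate [OF assms(1,2)] sum_interior_count_replicate [OF assms(1,2)]
  by (simp add: weighted_count_split)

lemma diagonal_gain_le_path_gain:
  fixes m i :: nat
  assumes "3 \<le> m" "3 \<le> i"
  shows "(2 * m - 3) * m \<le> 2 * (m - 2)\<^sup>2 * (m - 1) ^ i"
proof -
  obtain x where m: "m = x + 3"
    using assms(1) by (metis add.commute le_Suc_ex)
  have "(2 * m - 3) * m \<le> 2 * (m - 2)\<^sup>2 * (m - 1) ^ 3"
    unfolding m by (simp add: power2_eq_square power3_eq_cube algebra_simps)
  also have "\<dots> \<le> 2 * (m - 2)\<^sup>2 * (m - 1) ^ i"
    using assms by (intro mult_left_mono power_increasing) auto
  finally show ?thesis .
qed

lemma weighted_count_replicate_le:
  assumes "finite S" "card S = m" "finite C" "card C = m" "3 \<le> m"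
    and "\<forall>X\<in>set Xs. finite X \<and> card X = m" "odd (length Xs)" "3 \<le> length Xs"
  shows "weighted_count m C (replicate (length Xs) C) \<le> weighted_count m S Xs"
proof (cases "Xs = replicate (length Xs) S")
  case True
  have "weighted_count m S Xs = weighted_count m S (replicate (length Xs) S)"
    using True by (rule arg_cong)
  with assms(5) show ?thesis
    using weighted_count_replicate [OF assms(1,2)] weighted_count_replicate [OF assms(3,4)] by simp
next
  case False
  let ?i = "length Xs"
  let ?s = "fst (uniform_counts m ?i)" and ?d = "snd (uniform_counts m ?i)"
  have s: "?s = ?d + 1"
    using uniform_counts_odd assms(5,7) by simp
  have diagonal: "m * ?d \<le> (\<Sum>a\<in>S. interior_count Xs a a)"
    using sum_interior_count_diag_ge [OF assms(1,2,6)] s by simp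
  have "\<not> (\<forall>X\<in>set Xs. X = S)"
    using False replicate_length_same by metis
  then have paths: "m * (m - 1) ^ Suc ?i + 2 * (m - 1) ^ ?i \<le> (\<Sum>a\<in>S. \<Sum>b\<in>S. interior_count Xs a b)"
    using sum_sum_interior_count_ge_nonuniform [OF assms(6,1,2)] by blast
  have "weighted_count m C (replicate ?i C)
      = (2 * m - 3) * (m * ?d) + (2 * m - 3) * m + (m - 2)\<^sup>2 * (m * (m - 1) ^ Suc ?i)"
    using weighted_count_replicate [OF assms(3,4)] assms(5) s by (simp add: distrib_left)
  also have "\<dots> \<le> (2 * m - 3) * (m * ?d) + 2 * (m - 2)\<^sup>2 * (m - 1) ^ ?i
      + (m - 2)\<^sup>2 * (m * (m - 1) ^ Suc ?i)"
    using diagonal_gain_le_path_gain [OF assms(5,8)] by simp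
  also have "\<dots> = (2 * m - 3) * (m * ?d) + (m - 2)\<^sup>2 * (m * (m - 1) ^ Suc ?i + 2 * (m - 1) ^ ?i)"
    by (simp add: distrib_left)
  also have "\<dots> \<le> (2 * m - 3) * (\<Sum>a\<in>S. interior_count Xs a a)
      + (m - 2)\<^sup>2 * (\<Sum>a\<in>S. \<Sum>b\<in>S. interior_count Xs a b)"
    using diagonal paths by (intro add_mono mult_left_mono) auto
  also have "\<dots> = weighted_count m S Xs"
    using weighted_count_split [OF assms(1)] assms(5) by simp
  finally show ?thesis .
qed

section \<open>The theta graphs Theta(2, 2, n)\<close>

lemma theta_lens_simps [simp]:
  "theta_lens l1 l2 l3 (Suc 0) = l1" "theta_lens l1 l2 l3 2 = l2" "theta_lens l1 l2 l3 3 = l3"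
  by (simp_all add: theta_lens_def)

lemma theta_V_eq:
  "theta_V l1 l2 l3 = theta_pv (theta_lens l1 l2 l3) 1 ` {..l1} \<union> theta_pv (theta_lens l1 l2 l3) 2 ` {..l2}
     \<union> theta_pv (theta_lens l1 l2 l3) 3 ` {..l3}"
proof -
  have "theta_V l1 l2 l3 = (\<Union>i\<in>{1, 2, 3}. theta_pv (theta_lens l1 l2 l3) i ` {..theta_lens l1 l2 l3 i})"
    unfolding theta_V_def by blast
  then show ?thesis
    by (simp add: Un_assoc)
qed

lemma theta_V_2_2:
  assumes "2 \<le> n"
  shows "theta_V 2 2 n = {(0, 0), (0, 1), (1, 1), (2, 1)} \<union> Pair 3 ` {1..<n}"
proof -
  have "{..2::nat} = {0, 1, 2}" "{..n} = {0, n} \<union> {1..<n}"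
    using assms by auto
  then show ?thesis
    unfolding theta_V_eq using assms by (simp add: theta_pv_def insert_commute) (auto intro: image_cong)
qed

lemma theta_E_proper_iff:
  "(\<forall>x y. {x, y} \<in> theta_E l1 l2 l3 \<longrightarrow> f x \<noteq> f y) \<longleftrightarrow>
   (\<forall>i\<in>{1, 2, 3}. \<forall>j<theta_lens l1 l2 l3 i.
      f (theta_pv (theta_lens l1 l2 l3) i j) \<noteq> f (theta_pv (theta_lens l1 l2 l3) i (Suc j)))"
  (is "?L \<longleftrightarrow> ?R")
proof
  assume ?L
  then show ?R
    unfolding theta_E_def by blast
next
  assume R: ?R
  show ?L
  proof (intro allI impI)
    fix x y
    assume "{x, y} \<in> theta_E l1 l2 l3"
    then obtain i j where "i \<in> {1, 2, 3}" "j < theta_lens l1 l2 l3 i"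
      and "{x, y} = {theta_pv (theta_lens l1 l2 l3) i j, theta_pv (theta_lens l1 l2 l3) i (Suc j)}"
      unfolding theta_E_def by blast
    with R show "f x \<noteq> f y"
      by (auto simp: doubleton_eq_iff)
  qed
qed

lemma successively_map_upt:
  "successively P (map g [0..<Suc n]) \<longleftrightarrow> (\<forall>j<n. P (g j) (g (Suc j)))"
  by (auto simp: successively_conv_nth nth_append simp del: upt_Suc)

lemma theta_2_2_proper_iff:
  assumes "2 \<le> n"
  shows "(\<forall>x y. {x, y} \<in> theta_E 2 2 n \<longrightarrow> f x \<noteq> f y) \<longleftrightarrow>
    f (0, 0) \<noteq> f (1, 1) \<and> f (1, 1) \<noteq> f (0, 1) \<and> f (0, 0) \<noteq> f (2, 1) \<and> f (2, 1) \<noteq> f (0, 1) \<and>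
    successively (\<noteq>) (f (0, 0) # map (\<lambda>j. f (3, j)) [1..<n] @ [f (0, 1)])"
proof -
  let ?pv = "theta_pv (theta_lens 2 2 n)"
  have "[0..<Suc n] = 0 # [1..<n] @ [n]"
    using assms by (simp add: upt_conv_Cons)
  moreover have "map (\<lambda>j. f (?pv 3 j)) [1..<n] = map (\<lambda>j. f (3, j)) [1..<n]"
    by (rule map_cong) (auto simp: theta_pv_def)
  ultimately have "map (\<lambda>j. f (?pv 3 j)) [0..<Suc n] = f (0, 0) # map (\<lambda>j. f (3, j)) [1..<n] @ [f (0, 1)]"
    using assms by (simp add: theta_pv_def)
  then have "(\<forall>j<n. f (?pv 3 j) \<noteq> f (?pv 3 (Suc j)))
      \<longleftrightarrow> successively (\<noteq>) (f (0, 0) # map (\<lambda>j. f (3, j)) [1..<n] @ [f (0, 1)])"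
    using successively_map_upt [of "(\<noteq>)" "\<lambda>j. f (?pv 3 j)" n] by simp
  moreover have "(\<forall>j<2. P j) \<longleftrightarrow> P 0 \<and> P 1" for P :: "nat \<Rightarrow> bool"
    by (auto simp: less_Suc_eq numeral_2_eq_2)
  ultimately show ?thesis
    unfolding theta_E_proper_iff by (simp add: theta_pv_def conj_ac)
qed

definition theta_2_2_code :: "nat \<Rightarrow> (nat \<times> nat \<Rightarrow> 'c) \<Rightarrow> 'c \<times> 'c \<times> 'c \<times> 'c \<times> 'c list" where
  "theta_2_2_code n f = (f (0, 0), f (0, 1), f (1, 1), f (2, 1), map (\<lambda>j. f (3, j)) [1..<n])"

definition theta_2_2_codes :: "nat \<Rightarrow> (nat \<times> nat \<Rightarrow> 'c set) \<Rightarrow> ('c \<times> 'c \<times> 'c \<times> 'c \<times> 'c list) set" where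
  "theta_2_2_codes n L = (SIGMA a:L (0, 0). SIGMA b:L (0, 1). (L (1, 1) - {a, b}) \<times> (L (2, 1) - {a, b})
     \<times> interior_colourings (map (\<lambda>j. L (3, j)) [1..<n]) a b)"

lemma proper_list_colorings_theta_2_2_iff:
  assumes "2 \<le> n"
  shows "f \<in> proper_list_colorings (theta_V 2 2 n) (theta_E 2 2 n) L \<longleftrightarrow>
           theta_2_2_code n f \<in> theta_2_2_codes n L \<and> (\<forall>w. w \<notin> theta_V 2 2 n \<longrightarrow> f w = undefined)"
proof -
  have "list_all2 (\<in>) (map (\<lambda>j. f (3, j)) [1..<n]) (map (\<lambda>j. L (3, j)) [1..<n])
      \<longleftrightarrow> (\<forall>j\<in>{1..<n}. f (3, j) \<in> L (3, j))"
    by (auto simp: list_all2_map1 list_all2_map2 list_all2_same)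
  then show ?thesis
    unfolding proper_list_colorings_def theta_2_2_proper_iff [OF assms] theta_2_2_code_def theta_2_2_codes_def
      interior_colourings_def
    by (auto simp: theta_V_2_2 [OF assms])
qed

lemma inj_on_theta_2_2_code:
  assumes "2 \<le> n"
  shows "inj_on (theta_2_2_code n) (proper_list_colorings (theta_V 2 2 n) (theta_E 2 2 n) L)"
proof
  fix f g
  assume f: "f \<in> proper_list_colorings (theta_V 2 2 n) (theta_E 2 2 n) L"
    and g: "g \<in> proper_list_colorings (theta_V 2 2 n) (theta_E 2 2 n) L"
    and "theta_2_2_code n f = theta_2_2_code n g"
  then have "f w = g w" if "w \<in> theta_V 2 2 n" for w
    using that by (auto simp: theta_V_2_2 [OF assms] theta_2_2_code_def)
  with f g show "f = g"
    unfolding proper_list_colorings_theta_2_2_iff [OF assms] by (metis ext)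
qed

lemma theta_2_2_codes_subset_image:
  fixes L :: "nat \<times> nat \<Rightarrow> 'c set"
  assumes "2 \<le> n"
  shows "theta_2_2_codes n L \<subseteq> theta_2_2_code n ` proper_list_colorings (theta_V 2 2 n) (theta_E 2 2 n) L"
proof
  fix t
  assume t: "t \<in> theta_2_2_codes n L"
  then obtain a b c d ys where t_eq: "t = (a, b, c, d, ys)"
    and "ys \<in> interior_colourings (map (\<lambda>j. L (3, j)) [1..<n]) a b"
    unfolding theta_2_2_codes_def by blast
  then have len: "length ys = n - 1"
    by (auto simp: interior_colourings_def dest: list_all2_lengthD)
  define g :: "nat \<times> nat \<Rightarrow> 'c" where "g w = (if w = (0, 0) then a else if w = (0, 1) then b
    else if w = (1, 1) then c else if w = (2, 1) then d
    else if w \<in> Pair 3 ` {1..<n} then ys ! (snd w - 1) else undefined)" for w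
  have "map (\<lambda>j. g (3, j)) [1..<n] = ys"
    by (rule nth_equalityI) (auto simp: len g_def)
  then have "theta_2_2_code n g = t"
    by (simp add: theta_2_2_code_def g_def t_eq)
  moreover have "g \<in> proper_list_colorings (theta_V 2 2 n) (theta_E 2 2 n) L"
    using t \<open>theta_2_2_code n g = t\<close> unfolding proper_list_colorings_theta_2_2_iff [OF assms]
    by (auto simp: g_def theta_V_2_2 [OF assms])
  ultimately show "t \<in> theta_2_2_code n ` proper_list_colorings (theta_V 2 2 n) (theta_E 2 2 n) L"
    by blast
qed

lemma bij_betw_theta_2_2_code:
  assumes "2 \<le> n"
  shows "bij_betw (theta_2_2_code n) (proper_list_colorings (theta_V 2 2 n) (theta_E 2 2 n) L) (theta_2_2_codes n L)"
  unfolding bij_betw_def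
  using inj_on_theta_2_2_code [OF assms] theta_2_2_codes_subset_image [OF assms]
    proper_list_colorings_theta_2_2_iff [OF assms]
  by blast

lemma list_color_count_theta_2_2:
  fixes L :: "nat \<times> nat \<Rightarrow> 'c set"
  assumes "2 \<le> n" "\<forall>w\<in>theta_V 2 2 n. finite (L w)"
  defines "Xs \<equiv> map (\<lambda>j. L (3, j)) [1..<n]"
  shows "list_color_count (theta_V 2 2 n) (theta_E 2 2 n) L
    = (\<Sum>a\<in>L (0, 0). \<Sum>b\<in>L (0, 1).
         card (L (1, 1) - {a, b}) * card (L (2, 1) - {a, b}) * interior_count Xs a b)"
proof -
  have "list_color_count (theta_V 2 2 n) (theta_E 2 2 n) L = card (theta_2_2_codes n L)"
    unfolding list_color_count_def by (rule bij_betw_same_card [OF bij_betw_theta_2_2_code [OF assms(1)]])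
  also have "\<dots> = (\<Sum>a\<in>L (0, 0). \<Sum>b\<in>L (0, 1).
         card (L (1, 1) - {a, b}) * card (L (2, 1) - {a, b}) * interior_count Xs a b)"
    using assms(2) finite_interior_colourings [of Xs] card_interior_colourings [of Xs]
    by (simp add: theta_2_2_codes_def theta_V_2_2 [OF assms(1)] Xs_def card_cartesian_product mult.assoc)
  finally show ?thesis .
qed

lemma chrom_poly_theta_2_2:
  assumes "2 \<le> n"
  shows "chrom_poly (theta_V 2 2 n) (theta_E 2 2 n) m = weighted_count m {0..<m} (replicate (n - 1) {0..<m})"
proof -
  have "chrom_poly (theta_V 2 2 n) (theta_E 2 2 n) m = (\<Sum>a\<in>{0..<m}. \<Sum>b\<in>{0..<m}.
      card ({0..<m} - {a, b}) * card ({0..<m} - {a, b}) * interior_count (replicate (n - 1) {0..<m}) a b)"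
    unfolding chrom_poly_def by (subst list_color_count_theta_2_2 [OF assms]) (simp_all add: map_replicate_const)
  also have "\<dots> = weighted_count m {0..<m} (replicate (n - 1) {0..<m})"
    unfolding weighted_count_def by (intro sum.cong refl) (simp add: card_Diff_subset power2_eq_square)
  finally show ?thesis .
qed

lemma weighted_count_le_list_color_count_theta_2_2:
  fixes L :: "nat \<times> nat \<Rightarrow> 'c set"
  assumes "2 \<le> n" "is_m_assignment (theta_V 2 2 n) m L" "L (0, 0) = L (0, 1)"
  defines "Xs \<equiv> map (\<lambda>j. L (3, j)) [1..<n]"
  shows "weighted_count m (L (0, 0)) Xs \<le> list_color_count (theta_V 2 2 n) (theta_E 2 2 n) L"
proof -
  have fin: "\<forall>w\<in>theta_V 2 2 n. finite (L w) \<and> card (L w) = m"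
    using assms(2) by (simp add: is_m_assignment_def)
  then have bound: "m - card {a, b} \<le> card (L w - {a, b})" if "w \<in> theta_V 2 2 n" for w a b
    using that diff_card_le_card_Diff [of "{a, b}" "L w"] by simp
  have "(1, 1) \<in> theta_V 2 2 n" "(2, 1) \<in> theta_V 2 2 n"
    by (simp_all add: theta_V_2_2 [OF assms(1)])
  then have "(m - card {a, b})\<^sup>2 \<le> card (L (1, 1) - {a, b}) * card (L (2, 1) - {a, b})" for a b
    unfolding power2_eq_square using bound by (intro mult_mono) simp_all
  then have "weighted_count m (L (0, 0)) Xs \<le> (\<Sum>a\<in>L (0, 0). \<Sum>b\<in>L (0, 1).
      card (L (1, 1) - {a, b}) * card (L (2, 1) - {a, b}) * interior_count Xs a b)"
    unfolding weighted_count_def assms(3) by (intro sum_mono mult_right_mono) simp_all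
  also have "\<dots> = list_color_count (theta_V 2 2 n) (theta_E 2 2 n) L"
    using fin unfolding Xs_def by (simp add: list_color_count_theta_2_2 [OF assms(1)])
  finally show ?thesis .
qed

theorem lemma18:
  fixes k m :: nat and L :: "nat \<times> nat \<Rightarrow> 'c set"
  assumes "k \<ge> 2" and "m \<ge> 3"
    and "is_m_assignment (theta_V 2 2 (2*k)) m L"
    and "L theta_u = L theta_v"
  shows "list_color_count (theta_V 2 2 (2*k)) (theta_E 2 2 (2*k)) L
         \<ge> chrom_poly (theta_V 2 2 (2*k)) (theta_E 2 2 (2*k)) m"
proof -
  define n where "n = 2 * k"
  define Xs where "Xs = map (\<lambda>j. L (3, j)) [1..<n]"
  have n: "2 \<le> n" and len: "odd (length Xs)" "3 \<le> length Xs"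
    using assms(1) by (auto simp: n_def Xs_def)
  have "\<forall>w\<in>theta_V 2 2 n. finite (L w) \<and> card (L w) = m"
    using assms(3) by (simp add: is_m_assignment_def n_def)
  then have S: "finite (L (0, 0))" "card (L (0, 0)) = m" and Xs: "\<forall>X\<in>set Xs. finite X \<and> card X = m"
    by (auto simp: theta_V_2_2 [OF n] Xs_def)
  have "chrom_poly (theta_V 2 2 n) (theta_E 2 2 n) m = weighted_count m {0..<m} (replicate (length Xs) {0..<m})"
    using chrom_poly_theta_2_2 [OF n] by (simp add: Xs_def)
  also have "\<dots> \<le> weighted_count m (L (0, 0)) Xs"
    by (rule weighted_count_replicate_le [OF S _ _ assms(2) Xs len]) simp_all
  also have "\<dots> \<le> list_color_count (theta_V 2 2 n) (theta_E 2 2 n) L"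
    unfolding Xs_def by (rule weighted_count_le_list_color_count_theta_2_2 [OF n assms(3) [folded n_def] assms(4)])
  finally show ?thesis
    by (simp add: n_def)
qed

end
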